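(* Let $q$ be a prime power and let $n,k$ be integers with $3\le k\le n-2\le q-2$. Let $\alpha_1,\dots,\alpha_n\in\mathbb{F}_q$ be pairwise distinct, and let $C_{k-1,k-2}$ be the linear code generated by the $k\times n$ matrix $G_{k-1,k-2}$ whose rows are $(\alpha_1^{e},\dots,\alpha_n^{e})$ for $e=0,1,\dots,k-3,k,k+1$. For $1\le i\le n$ let $u_i=\prod_{1\le j\le n,\,j\ne i}(\alpha_i-\alpha_j)^{-1}$, and let $\sigma_t=\sigma_t(\alpha_1,\dots,\alpha_n)$. Define $$\Lambda_i=\alpha_i^{n-k+1}-\sigma_1\alpha_i^{n-k}+\sigma_2\alpha_i^{n-k-1}-\sigma_3\alpha_i^{n-k-2},\qquad \Gamma_i=\alpha_i^{n-k}-\sigma_1\alpha_i^{n-k-1}+\sigma_2\alpha_i^{n-k-2}.$$ Then the $(n-k)\times n$ matrix $H_{k-1,k-2}$ whose rows are $(u_1\alpha_1^{j},\dots,u_n\alpha_n^{j})$ for $j=0,1,\dots,n-k-3$, followed by $(u_1\Lambda_1,\dots,u_n\Lambda_n)$ and $(u_1\Gamma_1,\dots,u_n\Gamma_n)$, is a parity-check matrix for $C_{k-1,k-2}$.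
   Context: Convention: $0^0=1$. For variables $x_1,\dots,x_m$, $\sigma_t(x_1,\dots,x_m)$ denotes the $t$-th elementary symmetric polynomial, with $\sigma_0=1$ and $\sigma_t=0$ for $t>m$. A parity-check matrix of an $[n,k]$ code $C$ is an $(n-k)\times n$ matrix of rank $n-k$ whose rows span the dual code $C^\perp$ (Euclidean inner product). *)

theory Defs
  imports Main
begin

text \<open>Vectors of length n over a field are functions nat => 'a, only the
  coordinates 0..n-1 matter (they are taken to be 0 outside). A matrix with m rows
  and n columns is a function M :: nat => nat => 'a, M r i being the entry in row r,
  column i (r < m, i < n).\<close>

definition zero_ext :: "nat \<Rightarrow> (nat \<Rightarrow> 'a::zero) \<Rightarrow> nat \<Rightarrow> 'a" where
  "zero_ext n x = (\<lambda>i. if i < n then x i else 0)"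

definition vecs :: "nat \<Rightarrow> (nat \<Rightarrow> 'a::zero) set" where
  "vecs n = {x. \<forall>i\<ge>n. x i = 0}"

definition row_space :: "nat \<Rightarrow> nat \<Rightarrow> (nat \<Rightarrow> nat \<Rightarrow> 'a::field) \<Rightarrow> (nat \<Rightarrow> 'a) set" where
  "row_space m n M = {zero_ext n (\<lambda>i. \<Sum>r<m. c r * M r i) | c. True}"

definition dot :: "nat \<Rightarrow> (nat \<Rightarrow> 'a::field) \<Rightarrow> (nat \<Rightarrow> 'a) \<Rightarrow> 'a" where
  "dot n x y = (\<Sum>i<n. x i * y i)"

definition dual_code :: "nat \<Rightarrow> (nat \<Rightarrow> 'a::field) set \<Rightarrow> (nat \<Rightarrow> 'a) set" where
  "dual_code n C = {y \<in> vecs n. \<forall>x\<in>C. dot n x y = 0}"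

definition full_row_rank :: "nat \<Rightarrow> nat \<Rightarrow> (nat \<Rightarrow> nat \<Rightarrow> 'a::field) \<Rightarrow> bool" where
  "full_row_rank m n M \<longleftrightarrow>
     (\<forall>c. (\<forall>i<n. (\<Sum>r<m. c r * M r i) = 0) \<longrightarrow> (\<forall>r<m. c r = 0))"

definition parity_check :: "nat \<Rightarrow> nat \<Rightarrow> (nat \<Rightarrow> nat \<Rightarrow> 'a::field) \<Rightarrow> (nat \<Rightarrow> 'a) set \<Rightarrow> bool" where
  "parity_check m n H C \<longleftrightarrow> full_row_rank m n H \<and> row_space m n H = dual_code n C"

definition esym :: "nat \<Rightarrow> (nat \<Rightarrow> 'a::comm_ring_1) \<Rightarrow> nat \<Rightarrow> 'a" where
  "esym n x t = (\<Sum>S | S \<subseteq> {..<n} \<and> card S = t. \<Prod>i\<in>S. x i)"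

definition gen_exp :: "nat \<Rightarrow> nat \<Rightarrow> nat" where
  "gen_exp k r = (if r \<le> k - 3 then r else r + 2)"

definition genG :: "nat \<Rightarrow> (nat \<Rightarrow> 'a::field) \<Rightarrow> nat \<Rightarrow> nat \<Rightarrow> 'a" where
  "genG k \<alpha> r i = \<alpha> i ^ gen_exp k r"

definition uco :: "nat \<Rightarrow> (nat \<Rightarrow> 'a::field) \<Rightarrow> nat \<Rightarrow> 'a" where
  "uco n \<alpha> i = (\<Prod>j\<in>{..<n} - {i}. inverse (\<alpha> i - \<alpha> j))"

definition Lam :: "nat \<Rightarrow> nat \<Rightarrow> (nat \<Rightarrow> 'a::field) \<Rightarrow> nat \<Rightarrow> 'a" where
  "Lam n k \<alpha> i = \<alpha> i ^ (n - k + 1) - esym n \<alpha> 1 * \<alpha> i ^ (n - k)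
      + esym n \<alpha> 2 * \<alpha> i ^ (n - k - 1) - esym n \<alpha> 3 * \<alpha> i ^ (n - k - 2)"

definition Gam :: "nat \<Rightarrow> nat \<Rightarrow> (nat \<Rightarrow> 'a::field) \<Rightarrow> nat \<Rightarrow> 'a" where
  "Gam n k \<alpha> i = \<alpha> i ^ (n - k) - esym n \<alpha> 1 * \<alpha> i ^ (n - k - 1)
      + esym n \<alpha> 2 * \<alpha> i ^ (n - k - 2)"

definition parH :: "nat \<Rightarrow> nat \<Rightarrow> (nat \<Rightarrow> 'a::field) \<Rightarrow> nat \<Rightarrow> nat \<Rightarrow> 'a" where
  "parH n k \<alpha> r i =
     (if r < n - k - 2 then uco n \<alpha> i * \<alpha> i ^ r
      else if r = n - k - 2 then uco n \<alpha> i * Lam n k \<alpha> i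
      else uco n \<alpha> i * Gam n k \<alpha> i)"

end

(* Write a vector of length n as (u_i f(\<alpha>_i))_i with deg f < n (Lagrange interpolation).
   Since u_i = 1 / P'(\<alpha>_i) for the node polynomial P = \<Prod>_j (x - \<alpha>_j), its inner product
   with the row (\<alpha>_i^e)_i is the sum of the residues of x^e f / P: this is the coefficient of
   x^(n-1) of x^e f if deg (x^e f) < n, and it vanishes on multiples of P.
   The rows of H come in this way from x^j (j < n-k-2), \<Lambda> and \<Gamma>. By Vieta's formulas
   x^(k-1) \<Lambda> and x^k \<Gamma> agree with P in all coefficients of degree \<ge> n-3 resp. n-2, so modulo P
   every x^e times a row polynomial, e an exponent of G, has degree < n-1: H is orthogonal to G.
   Conversely, for a dual vector the relations for e = 0, ..., k-3 kill the coefficients of f of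
   degree \<ge> n-k+2; after subtracting multiples of \<Lambda> and \<Gamma> to clear degrees n-k+1 and n-k,
   the relations for e = k, k+1 kill degrees n-k-1 and n-k-2, leaving a combination of the x^j.
   The same triangular shape of the coefficients makes the rows of H independent. *)

theory Submission
  imports Defs "HOL-Computational_Algebra.Polynomial"
begin

subsection \<open>The node polynomial and Vieta's formulas\<close>

lemma poly_eq_sum_monom_lessThan:
  assumes "\<forall>m\<ge>d. coeff p m = 0"
  shows "p = (\<Sum>i<d. monom (coeff p i) i)"
  using assms by (auto simp: poly_eq_iff coeff_sum coeff_monom not_less)

definition node_poly :: "nat \<Rightarrow> (nat \<Rightarrow> 'a::comm_ring_1) \<Rightarrow> 'a poly" where
  "node_poly n \<alpha> = (\<Prod>j<n. [:- \<alpha> j, 1:])"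

definition node_poly_except :: "nat \<Rightarrow> (nat \<Rightarrow> 'a::comm_ring_1) \<Rightarrow> nat \<Rightarrow> 'a poly" where
  "node_poly_except n \<alpha> i = (\<Prod>j\<in>{..<n} - {i}. [:- \<alpha> j, 1:])"

lemma esym_0 [simp]: "esym n \<alpha> 0 = 1"
proof -
  have "{S. S \<subseteq> {..<n} \<and> card S = 0} = {{}}"
    using finite_subset[of _ "{..<n}"] by auto
  then show ?thesis by (simp add: esym_def)
qed

lemma node_poly_eq_sum_subsets:
  "node_poly n \<alpha> = (\<Sum>X\<in>Pow {..<n}. monom (\<Prod>j\<in>X. - \<alpha> j) (n - card X))"
proof -
  have "node_poly n \<alpha> =
      (\<Sum>X\<in>Pow {..<n}. (\<Prod>j\<in>X. [:- \<alpha> j:]) * (\<Prod>j\<in>{..<n} - X. monom 1 1))"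
    unfolding node_poly_def by (subst prod_add[symmetric]) (simp_all add: monom_altdef)
  also have "\<dots> = (\<Sum>X\<in>Pow {..<n}. monom (\<Prod>j\<in>X. - \<alpha> j) (n - card X))"
  proof (intro sum.cong refl)
    fix X assume "X \<in> Pow {..<n}"
    then have "finite X" "card ({..<n} - X) = n - card X"
      by (auto simp: card_Diff_subset finite_subset)
    then show "(\<Prod>j\<in>X. [:- \<alpha> j:]) * (\<Prod>j\<in>{..<n} - X. monom 1 1) =
        monom (\<Prod>j\<in>X. - \<alpha> j) (n - card X)"
      by (simp add: monom_power smult_monom prod_to_poly)
  qed
  finally show ?thesis .
qed

lemma coeff_node_poly:
  assumes "m \<le> n"
  shows "coeff (node_poly n \<alpha>) m = (-1) ^ (n - m) * esym n \<alpha> (n - m)"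
proof -
  have card_le: "X \<in> Pow {..<n} \<Longrightarrow> card X \<le> n" for X
    using card_mono[of "{..<n}" X] by auto
  have "coeff (node_poly n \<alpha>) m =
      (\<Sum>X\<in>Pow {..<n}. if card X = n - m then \<Prod>j\<in>X. - \<alpha> j else 0)"
    unfolding node_poly_eq_sum_subsets coeff_sum coeff_monom
    using assms card_le by (intro sum.cong refl) fastforce
  also have "\<dots> = (\<Sum>X | X \<subseteq> {..<n} \<and> card X = n - m. (-1) ^ (n - m) * (\<Prod>j\<in>X. \<alpha> j))"
    by (subst sum.If_cases) (auto simp: prod_uminus Pow_def intro!: sum.cong)
  finally show ?thesis
    by (simp add: esym_def sum_distrib_left)
qed

lemma degree_node_poly: "degree (node_poly n (\<alpha> :: nat \<Rightarrow> 'a::idom)) = n"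
  unfolding node_poly_def by (subst degree_prod_eq_sum_degree) auto

lemma poly_node_poly_node: "i < n \<Longrightarrow> poly (node_poly n \<alpha>) (\<alpha> i) = 0"
  unfolding node_poly_def poly_prod by (rule prod_zero) auto

lemma poly_node_poly_except_node:
  "i < n \<Longrightarrow> i \<noteq> j \<Longrightarrow> poly (node_poly_except n \<alpha> j) (\<alpha> i) = 0"
  unfolding node_poly_except_def poly_prod by (rule prod_zero) auto

lemma coeff_node_poly_except:
  fixes \<alpha> :: "nat \<Rightarrow> 'a::idom"
  assumes "i < n"
  shows "coeff (node_poly_except n \<alpha> i) (n - 1) = 1"
    and "n \<le> m \<Longrightarrow> coeff (node_poly_except n \<alpha> i) m = 0"
proof -
  have deg: "degree (node_poly_except n \<alpha> i) = n - 1"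
    unfolding node_poly_except_def using assms by (subst degree_prod_eq_sum_degree) auto
  have "lead_coeff (node_poly_except n \<alpha> i) = 1"
    unfolding node_poly_except_def lead_coeff_prod by simp
  then show "coeff (node_poly_except n \<alpha> i) (n - 1) = 1"
    using deg by simp
  show "n \<le> m \<Longrightarrow> coeff (node_poly_except n \<alpha> i) m = 0"
    using deg assms by (intro coeff_eq_0) auto
qed

text \<open>By Vieta's formulas, \<open>vieta_poly n \<alpha> t n\<close> is the part of degree \<open>\<ge> n - t\<close> of
  \<open>node_poly n \<alpha>\<close>; the parameter \<open>d\<close> shifts it to degree \<open>d\<close>.\<close>

definition vieta_poly :: "nat \<Rightarrow> (nat \<Rightarrow> 'a::comm_ring_1) \<Rightarrow> nat \<Rightarrow> nat \<Rightarrow> 'a poly" where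
  "vieta_poly n \<alpha> t d = (\<Sum>s\<le>t. monom ((-1) ^ s * esym n \<alpha> s) (d - s))"

lemma coeff_vieta_poly:
  assumes "t \<le> d"
  shows "coeff (vieta_poly n \<alpha> t d) m =
    (if d - t \<le> m \<and> m \<le> d then (-1) ^ (d - m) * esym n \<alpha> (d - m) else 0)"
proof -
  have "coeff (vieta_poly n \<alpha> t d) m =
      (\<Sum>s\<le>t. if s = d - m \<and> m \<le> d then (-1) ^ s * esym n \<alpha> s else 0)"
    unfolding vieta_poly_def coeff_sum coeff_monom
    using assms by (intro sum.cong refl) auto
  also have "\<dots> = (if d - t \<le> m \<and> m \<le> d then (-1) ^ (d - m) * esym n \<alpha> (d - m) else 0)"
    using assms by auto
  finally show ?thesis .
qed

lemma coeff_vieta_poly_degree: "t \<le> d \<Longrightarrow> coeff (vieta_poly n \<alpha> t d) d = 1"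
  by (simp add: coeff_vieta_poly)

lemma coeff_vieta_poly_pred:
  "1 \<le> t \<Longrightarrow> t \<le> d \<Longrightarrow> coeff (vieta_poly n \<alpha> t d) (d - 1) = - esym n \<alpha> 1"
  by (simp add: coeff_vieta_poly)

lemma coeff_vieta_poly_eq_0:
  "t \<le> d \<Longrightarrow> m < d - t \<or> d < m \<Longrightarrow> coeff (vieta_poly n \<alpha> t d) m = 0"
  by (auto simp: coeff_vieta_poly)

lemma coeff_vieta_poly_eq_coeff_node_poly:
  fixes \<alpha> :: "nat \<Rightarrow> 'a::idom"
  assumes "t \<le> n" "n - t \<le> m"
  shows "coeff (vieta_poly n \<alpha> t n) m = coeff (node_poly n \<alpha>) m"
  using assms by (auto simp: coeff_vieta_poly coeff_node_poly degree_node_poly coeff_eq_0)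

lemma monom_mult_vieta_poly:
  assumes "t \<le> d"
  shows "monom 1 e * vieta_poly n \<alpha> t d = vieta_poly n \<alpha> t (d + e)"
  unfolding vieta_poly_def sum_distrib_left
  using assms by (intro sum.cong refl) (simp add: mult_monom add.commute)

lemma poly_vieta_poly_Lam: "poly (vieta_poly n \<alpha> 3 (n - k + 1)) (\<alpha> i) = Lam n k \<alpha> i"
  by (simp add: vieta_poly_def Lam_def poly_monom eval_nat_numeral)

lemma poly_vieta_poly_Gam: "poly (vieta_poly n \<alpha> 2 (n - k)) (\<alpha> i) = Gam n k \<alpha> i"
  by (simp add: vieta_poly_def Gam_def poly_monom eval_nat_numeral)

subsection \<open>Sums of residues over the nodes\<close>

definition residue_sum :: "nat \<Rightarrow> (nat \<Rightarrow> 'a::field) \<Rightarrow> 'a poly \<Rightarrow> 'a" where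
  "residue_sum n \<alpha> p = (\<Sum>i<n. uco n \<alpha> i * poly p (\<alpha> i))"

lemma residue_sum_diff: "residue_sum n \<alpha> (p - q) = residue_sum n \<alpha> p - residue_sum n \<alpha> q"
  by (simp add: residue_sum_def right_diff_distrib sum_subtractf)

lemma residue_sum_smult: "residue_sum n \<alpha> (smult c p) = c * residue_sum n \<alpha> p"
  by (simp add: residue_sum_def sum_distrib_left mult_ac)

lemma residue_sum_mult_node_poly: "residue_sum n \<alpha> (q * node_poly n \<alpha>) = 0"
  by (simp add: residue_sum_def poly_node_poly_node)

locale distinct_nodes =
  fixes \<alpha> :: "nat \<Rightarrow> 'a::field" and n :: nat
  assumes inj: "inj_on \<alpha> {..<n}"
begin

lemma uco_mult_poly_node_poly_except:
  assumes "i < n" "l < n"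
  shows "uco n \<alpha> i * poly (node_poly_except n \<alpha> i) (\<alpha> l) = (if l = i then 1 else 0)"
proof (cases "l = i")
  case True
  have "\<alpha> i - \<alpha> j \<noteq> 0" if "j \<in> {..<n} - {i}" for j
    using inj assms that by (auto simp: inj_on_def)
  then show ?thesis
    using True by (simp add: uco_def node_poly_except_def poly_prod flip: prod.distrib)
next
  case False
  then show ?thesis
    using assms by (simp add: poly_node_poly_except_node)
qed

lemma uco_nonzero: "i < n \<Longrightarrow> uco n \<alpha> i \<noteq> 0"
  using uco_mult_poly_node_poly_except[of i i] by auto

lemma poly_eq_0_if_vanishes_at_nodes:
  assumes "\<forall>m\<ge>n. coeff p m = 0" and "\<forall>i<n. poly p (\<alpha> i) = 0"
  shows "p = 0"
proof (cases "p = 0")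
  case False
  then have "degree p < n"
    using assms(1) by (meson leading_coeff_0_iff not_le)
  moreover have "card (\<alpha> ` {..<n}) = n"
    using inj by (simp add: card_image)
  ultimately show "p = 0"
    using assms(2) by (intro poly_eqI_degree[where A = "\<alpha> ` {..<n}"]) auto
qed

lemma lagrange_interpolation:
  assumes "\<forall>m\<ge>n. coeff p m = 0"
  shows "p = (\<Sum>i<n. smult (uco n \<alpha> i * poly p (\<alpha> i)) (node_poly_except n \<alpha> i))"
proof -
  let ?q = "\<Sum>i<n. smult (uco n \<alpha> i * poly p (\<alpha> i)) (node_poly_except n \<alpha> i)"
  have "p - ?q = 0"
  proof (rule poly_eq_0_if_vanishes_at_nodes)
    show "\<forall>m\<ge>n. coeff (p - ?q) m = 0"
      using assms by (simp add: coeff_sum coeff_node_poly_except)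
    show "\<forall>l<n. poly (p - ?q) (\<alpha> l) = 0"
    proof (intro allI impI)
      fix l assume "l < n"
      have "poly ?q (\<alpha> l) =
          (\<Sum>i<n. poly p (\<alpha> i) * (uco n \<alpha> i * poly (node_poly_except n \<alpha> i) (\<alpha> l)))"
        by (simp add: poly_sum mult_ac)
      also have "\<dots> = (\<Sum>i<n. if l = i then poly p (\<alpha> i) else 0)"
        using \<open>l < n\<close> by (intro sum.cong refl) (simp add: uco_mult_poly_node_poly_except)
      also have "\<dots> = poly p (\<alpha> l)"
        using \<open>l < n\<close> by simp
      finally show "poly (p - ?q) (\<alpha> l) = 0" by simp
    qed
  qed
  then show ?thesis by simp
qed

lemma residue_sum_eq_coeff:
  assumes "\<forall>m\<ge>n. coeff p m = 0"
  shows "residue_sum n \<alpha> p = coeff p (n - 1)"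
proof -
  have "coeff p (n - 1) =
      (\<Sum>i<n. uco n \<alpha> i * poly p (\<alpha> i) * coeff (node_poly_except n \<alpha> i) (n - 1))"
    by (subst lagrange_interpolation[OF assms]) (simp add: coeff_sum)
  also have "\<dots> = residue_sum n \<alpha> p"
    unfolding residue_sum_def by (intro sum.cong refl) (subst coeff_node_poly_except, auto)
  finally show ?thesis ..
qed

lemma residue_sum_eq_0:
  assumes "\<forall>m\<ge>n - 1. coeff p m = 0"
  shows "residue_sum n \<alpha> p = 0"
  using assms residue_sum_eq_coeff by simp

lemma residue_sum_monom_mult:
  assumes "\<forall>m\<ge>n - e. coeff g m = 0"
  shows "residue_sum n \<alpha> (monom 1 e * g) = coeff g (n - 1 - e)"
  using assms by (subst residue_sum_eq_coeff) (auto simp: coeff_monom_mult)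

lemma residue_sum_vieta_poly:
  assumes "e < t" "t \<le> n"
  shows "residue_sum n \<alpha> (vieta_poly n \<alpha> t (n + e)) = 0"
proof -
  define D where "D = node_poly n \<alpha> - vieta_poly n \<alpha> t n"
  have "\<forall>m\<ge>n - t. coeff D m = 0"
    using assms by (simp add: D_def coeff_vieta_poly_eq_coeff_node_poly)
  then have "\<forall>m\<ge>n - 1. coeff (monom 1 e * D) m = 0"
    using assms by (auto simp: coeff_monom_mult)
  moreover have "vieta_poly n \<alpha> t (n + e) = monom 1 e * node_poly n \<alpha> - monom 1 e * D"
    using assms by (simp add: D_def monom_mult_vieta_poly right_diff_distrib)
  ultimately show ?thesis
    by (simp add: residue_sum_diff residue_sum_mult_node_poly residue_sum_eq_0)
qed

lemma exists_interpolating_poly: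
  "\<exists>f. (\<forall>m\<ge>n. coeff f m = 0) \<and> (\<forall>i<n. uco n \<alpha> i * poly f (\<alpha> i) = y i)"
proof (intro exI conjI allI impI)
  let ?f = "\<Sum>j<n. smult (y j) (node_poly_except n \<alpha> j)"
  show "coeff ?f m = 0" if "n \<le> m" for m
    using that by (simp add: coeff_sum coeff_node_poly_except)
  show "uco n \<alpha> i * poly ?f (\<alpha> i) = y i" if "i < n" for i
  proof -
    have "uco n \<alpha> i * poly ?f (\<alpha> i) =
        (\<Sum>j<n. y j * (uco n \<alpha> i * poly (node_poly_except n \<alpha> j) (\<alpha> i)))"
      by (simp add: poly_sum sum_distrib_left mult_ac)
    also have "\<dots> = (\<Sum>j<n. if j = i then y i else 0)"
      using that by (intro sum.cong refl) (simp add: uco_mult_poly_node_poly_except poly_node_poly_except_node)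
    finally show ?thesis
      using that by simp
  qed
qed

lemma coeffs_vanish_by_residue_sums:
  assumes "\<forall>m\<ge>n - a. coeff g m = 0"
    and "\<And>e. a \<le> e \<Longrightarrow> e < a + j \<Longrightarrow> residue_sum n \<alpha> (monom 1 e * g) = 0"
  shows "\<forall>m\<ge>n - (a + j). coeff g m = 0"
proof -
  have "\<forall>m\<ge>n - (a + i). coeff g m = 0" if "i \<le> j" for i
    using that
  proof (induction i)
    case (Suc i)
    then have "coeff g (n - 1 - (a + i)) = residue_sum n \<alpha> (monom 1 (a + i) * g)"
      using residue_sum_monom_mult by simp
    also have "\<dots> = 0"
      using assms(2) Suc.prems by simp
    finally have "coeff g (n - Suc (a + i)) = 0" by simp
    moreover have "\<forall>m\<ge>n - (a + i). coeff g m = 0"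
      using Suc by simp
    moreover have "n - (a + i) \<le> m \<or> m = n - Suc (a + i)" if "n - (a + Suc i) \<le> m" for m
      using that by linarith
    ultimately show ?case
      by (metis add_Suc_right)
  qed (use assms(1) in simp)
  then show ?thesis by blast
qed

end

lemma row_space_subset_dual_code:
  assumes "\<And>r s. r < k \<Longrightarrow> s < m \<Longrightarrow> (\<Sum>i<n. G r i * H s i) = 0"
  shows "row_space m n H \<subseteq> dual_code n (row_space k n G)"
proof
  fix y assume "y \<in> row_space m n H"
  then obtain d where y: "y = zero_ext n (\<lambda>i. \<Sum>s<m. d s * H s i)"
    by (auto simp: row_space_def)
  have "dot n x y = 0" if x_in: "x \<in> row_space k n G" for x
  proof -
    obtain c where x: "x = zero_ext n (\<lambda>i. \<Sum>r<k. c r * G r i)"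
      using x_in unfolding row_space_def by blast
    have "dot n x y = (\<Sum>i<n. \<Sum>r<k. \<Sum>s<m. c r * d s * (G r i * H s i))"
      by (simp add: dot_def x y zero_ext_def sum_product mult_ac)
    also have "\<dots> = (\<Sum>r<k. \<Sum>s<m. c r * d s * (\<Sum>i<n. G r i * H s i))"
      by (simp add: sum_distrib_left sum.swap[where A = "{..<n}"])
    also have "\<dots> = 0"
      using assms by simp
    finally show ?thesis .
  qed
  then show "y \<in> dual_code n (row_space k n G)"
    by (simp add: dual_code_def vecs_def y zero_ext_def)
qed

lemma dual_code_orthogonal_row:
  assumes "y \<in> dual_code n (row_space k n G)" "r < k"
  shows "(\<Sum>i<n. G r i * y i) = 0"
proof -
  have "zero_ext n (G r) \<in> row_space k n G"
    unfolding row_space_def using assms(2)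
    by (intro CollectI exI[of _ "\<lambda>r'. of_bool (r' = r)"]) simp
  then have "dot n (zero_ext n (G r)) y = 0"
    using assms(1) by (simp add: dual_code_def)
  then show ?thesis
    by (simp add: dot_def zero_ext_def)
qed

subsection \<open>The polynomials behind the rows of the parity-check matrix\<close>

definition parity_poly :: "nat \<Rightarrow> nat \<Rightarrow> (nat \<Rightarrow> 'a::field) \<Rightarrow> nat \<Rightarrow> 'a poly" where
  "parity_poly n k \<alpha> r =
     (if r < n - k - 2 then monom 1 r
      else if r = n - k - 2 then vieta_poly n \<alpha> 3 (n - k + 1)
      else vieta_poly n \<alpha> 2 (n - k))"

lemma sum_genG_mult_eq_residue_sum:
  "(\<Sum>i<n. genG k \<alpha> r i * (uco n \<alpha> i * poly f (\<alpha> i))) =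
    residue_sum n \<alpha> (monom 1 (gen_exp k r) * f)"
  by (simp add: residue_sum_def genG_def poly_monom mult_ac)

lemma parity_poly_last_rows:
  assumes "k + 2 \<le> n"
  shows "parity_poly n k \<alpha> (n - k - 2) = vieta_poly n \<alpha> 3 (n - k + 1)"
    and "parity_poly n k \<alpha> (n - k - 1) = vieta_poly n \<alpha> 2 (n - k)"
  using assms by (auto simp: parity_poly_def)

lemma parH_eq: "parH n k \<alpha> r i = uco n \<alpha> i * poly (parity_poly n k \<alpha> r) (\<alpha> i)"
  by (simp add: parH_def parity_poly_def poly_monom flip: poly_vieta_poly_Lam poly_vieta_poly_Gam)

lemma uco_mult_poly_sum_parity_poly:
  "uco n \<alpha> i * poly (\<Sum>r<m. smult (c r) (parity_poly n k \<alpha> r)) (\<alpha> i) =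
    (\<Sum>r<m. c r * parH n k \<alpha> r i)"
  by (simp add: poly_sum parH_eq sum_distrib_left mult_ac)

lemma coeff_parity_poly:
  assumes "k + 2 \<le> n" "n - k + 2 \<le> m"
  shows "coeff (parity_poly n k \<alpha> r) m = 0"
  using assms by (auto simp: parity_poly_def coeff_monom coeff_vieta_poly)

lemma sum_parity_poly:
  assumes "k + 2 \<le> n"
  shows "(\<Sum>r<n - k. smult (c r) (parity_poly n k \<alpha> r)) =
    (\<Sum>r<n - k - 2. monom (c r) r) + smult (c (n - k - 2)) (vieta_poly n \<alpha> 3 (n - k + 1))
      + smult (c (n - k - 1)) (vieta_poly n \<alpha> 2 (n - k))"
proof -
  have "n - k = Suc (Suc (n - k - 2))" "Suc (n - k - 2) = n - k - 1"
    using assms by simp_all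
  then have "(\<Sum>r<n - k. smult (c r) (parity_poly n k \<alpha> r)) =
      (\<Sum>r<n - k - 2. smult (c r) (parity_poly n k \<alpha> r)) + smult (c (n - k - 2)) (vieta_poly n \<alpha> 3 (n - k + 1))
        + smult (c (n - k - 1)) (vieta_poly n \<alpha> 2 (n - k))"
    using assms by (simp add: parity_poly_def)
  also have "(\<Sum>r<n - k - 2. smult (c r) (parity_poly n k \<alpha> r)) = (\<Sum>r<n - k - 2. monom (c r) r)"
    by (intro sum.cong refl) (simp add: parity_poly_def smult_monom)
  finally show ?thesis .
qed

lemma parity_polys_independent:
  assumes "k + 2 \<le> n" and "(\<Sum>r<n - k. smult (c r) (parity_poly n k \<alpha> r)) = 0" and "r < n - k"
  shows "c r = 0"
proof -
  have coeff_eq_0: "(if m < n - k - 2 then c m else 0) + c (n - k - 2) * coeff (vieta_poly n \<alpha> 3 (n - k + 1)) m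
      + c (n - k - 1) * coeff (vieta_poly n \<alpha> 2 (n - k)) m = 0" for m
    using arg_cong[OF assms(2), of "\<lambda>p. coeff p m"]
    by (simp add: sum_parity_poly[OF assms(1)] coeff_sum coeff_monom)
  have "coeff (vieta_poly n \<alpha> 3 (n - k + 1)) (n - k + 1) = 1"
    "coeff (vieta_poly n \<alpha> 2 (n - k)) (n - k + 1) = 0"
    "coeff (vieta_poly n \<alpha> 2 (n - k)) (n - k) = 1"
    using assms(1) by (simp_all add: coeff_vieta_poly_degree coeff_vieta_poly_eq_0)
  then have c1: "c (n - k - 2) = 0" and c2: "c (n - k - 1) = 0"
    using coeff_eq_0[of "n - k + 1"] coeff_eq_0[of "n - k"] by (auto split: if_splits)
  show ?thesis
  proof (cases "r < n - k - 2")
    case True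
    then show ?thesis
      using coeff_eq_0[of r] c1 c2 by simp
  next
    case False
    then have "r = n - k - 2 \<or> r = n - k - 1"
      using assms(3) by linarith
    then show ?thesis
      using c1 c2 by auto
  qed
qed

lemma coeff_minus_vieta_polys_eq_0:
  fixes \<alpha> :: "nat \<Rightarrow> 'a::comm_ring_1" and f :: "'a poly"
  assumes "k + 2 \<le> n" and f_top: "\<forall>m\<ge>n - k + 2. coeff f m = 0"
  defines "a \<equiv> coeff f (n - k + 1)"
  defines "b \<equiv> coeff f (n - k) + a * esym n \<alpha> 1"
  shows "\<forall>m\<ge>n - k.
    coeff (f - smult a (vieta_poly n \<alpha> 3 (n - k + 1)) - smult b (vieta_poly n \<alpha> 2 (n - k))) m = 0"
proof (intro allI impI)
  let ?\<Lambda> = "vieta_poly n \<alpha> 3 (n - k + 1)" and ?\<Gamma> = "vieta_poly n \<alpha> 2 (n - k)"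
  have coeffs: "coeff ?\<Lambda> (n - k + 1) = 1" "coeff ?\<Lambda> (n - k) = - esym n \<alpha> 1"
    "coeff ?\<Gamma> (n - k + 1) = 0" "coeff ?\<Gamma> (n - k) = 1"
    using assms(1) coeff_vieta_poly_pred[of 3 "n - k + 1" n \<alpha>]
    by (simp_all add: coeff_vieta_poly_degree coeff_vieta_poly_eq_0)
  have high: "coeff f m = 0 \<and> coeff ?\<Lambda> m = 0 \<and> coeff ?\<Gamma> m = 0" if "n - k + 1 < m" for m
    using that f_top assms(1) by (simp add: coeff_vieta_poly_eq_0)
  fix m assume "n - k \<le> m"
  then consider "m = n - k" | "m = n - k + 1" | "n - k + 1 < m"
    by linarith
  then show "coeff (f - smult a ?\<Lambda> - smult b ?\<Gamma>) m = 0"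
    by cases (use coeffs high[of m] in \<open>simp_all add: a_def b_def\<close>)
qed

locale parity_check_setup = distinct_nodes \<alpha> n for \<alpha> :: "nat \<Rightarrow> 'a::field" and n +
  fixes k :: nat
  assumes k_ge: "3 \<le> k" and k_le: "k + 2 \<le> n"
begin

lemma residue_sum_parity_poly:
  assumes "r < k" "s < n - k"
  shows "residue_sum n \<alpha> (monom 1 (gen_exp k r) * parity_poly n k \<alpha> s) = 0"
proof (cases "r \<le> k - 3")
  case True
  then show ?thesis
    using k_ge k_le by (intro residue_sum_eq_0)
      (auto simp: gen_exp_def coeff_monom_mult intro!: coeff_parity_poly[OF k_le])
next
  case False
  then obtain j where j: "j < 2" "gen_exp k r = k + j"
    using assms(1) by (intro that[of "r + 2 - k"]) (auto simp: gen_exp_def)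
  consider "s < n - k - 2" | "s = n - k - 2" | "s = n - k - 1"
    using assms(2) by linarith
  then show ?thesis
  proof cases
    case 1
    then show ?thesis
      using j by (intro residue_sum_eq_0) (auto simp: parity_poly_def mult_monom coeff_monom)
  next
    case 2
    have "monom 1 (gen_exp k r) * parity_poly n k \<alpha> s = vieta_poly n \<alpha> 3 (n + (j + 1))"
      unfolding 2 j(2) parity_poly_last_rows[OF k_le] using k_le by (simp add: monom_mult_vieta_poly)
    moreover have "residue_sum n \<alpha> (vieta_poly n \<alpha> 3 (n + (j + 1))) = 0"
      using j k_ge k_le by (intro residue_sum_vieta_poly) simp_all
    ultimately show ?thesis by simp
  next
    case 3
    have "monom 1 (gen_exp k r) * parity_poly n k \<alpha> s = vieta_poly n \<alpha> 2 (n + j)"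
      unfolding 3 j(2) parity_poly_last_rows[OF k_le] using k_le by (simp add: monom_mult_vieta_poly)
    moreover have "residue_sum n \<alpha> (vieta_poly n \<alpha> 2 (n + j)) = 0"
      using j k_ge k_le by (intro residue_sum_vieta_poly) simp_all
    ultimately show ?thesis by simp
  qed
qed

lemma row_space_parH_subset_dual_code:
  "row_space (n - k) n (parH n k \<alpha>) \<subseteq> dual_code n (row_space k n (genG k \<alpha>))"
  by (rule row_space_subset_dual_code)
    (simp add: parH_eq sum_genG_mult_eq_residue_sum residue_sum_parity_poly)

lemma high_coeffs_vanish_if_orthogonal:
  assumes f_deg: "\<forall>m\<ge>n. coeff f m = 0"
    and f_orth: "\<And>r. r < k \<Longrightarrow> residue_sum n \<alpha> (monom 1 (gen_exp k r) * f) = 0"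
  shows "\<forall>m\<ge>n - k + 2. coeff f m = 0"
proof -
  have "residue_sum n \<alpha> (monom 1 e * f) = 0" if "e < k - 2" for e
  proof -
    have "e \<le> k - 3" "e < k"
      using that by linarith+
    then show ?thesis
      using f_orth[of e] by (simp add: gen_exp_def)
  qed
  then have "\<forall>m\<ge>n - (0 + (k - 2)). coeff f m = 0"
    using f_deg by (intro coeffs_vanish_by_residue_sums) auto
  moreover have "n - (0 + (k - 2)) = n - k + 2"
    using k_ge k_le by simp
  ultimately show ?thesis by simp
qed

lemma parity_polys_span:
  assumes f_deg: "\<forall>m\<ge>n. coeff f m = 0"
    and f_orth: "\<And>r. r < k \<Longrightarrow> residue_sum n \<alpha> (monom 1 (gen_exp k r) * f) = 0"
  shows "\<exists>c. f = (\<Sum>r<n - k. smult (c r) (parity_poly n k \<alpha> r))"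
proof -
  let ?\<Lambda> = "vieta_poly n \<alpha> 3 (n - k + 1)" and ?\<Gamma> = "vieta_poly n \<alpha> 2 (n - k)"
  define a where "a = coeff f (n - k + 1)"
  define b where "b = coeff f (n - k) + a * esym n \<alpha> 1"
  define g where "g = f - smult a ?\<Lambda> - smult b ?\<Gamma>"
  define c where "c r = (if r < n - k - 2 then coeff g r else if r = n - k - 2 then a else b)" for r
  have "\<forall>m\<ge>n - k. coeff g m = 0"
    unfolding g_def a_def b_def
    using k_le high_coeffs_vanish_if_orthogonal[OF f_deg f_orth] by (rule coeff_minus_vieta_polys_eq_0)
  moreover have "residue_sum n \<alpha> (monom 1 e * g) = 0" if "k \<le> e" "e < k + 2" for e
  proof -
    have e: "gen_exp k (e - 2) = e" "e - 2 < k"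
      using that k_ge by (auto simp: gen_exp_def)
    then have "residue_sum n \<alpha> (monom 1 e * ?\<Lambda>) = 0" "residue_sum n \<alpha> (monom 1 e * ?\<Gamma>) = 0"
      using residue_sum_parity_poly[of "e - 2" "n - k - 2"] residue_sum_parity_poly[of "e - 2" "n - k - 1"] k_le
      unfolding parity_poly_last_rows[OF k_le] e(1) by simp_all
    moreover have "residue_sum n \<alpha> (monom 1 e * f) = 0"
      using f_orth[of "e - 2"] e by simp
    ultimately show ?thesis
      by (simp add: g_def right_diff_distrib mult_smult_right residue_sum_diff residue_sum_smult)
  qed
  ultimately have "\<forall>m\<ge>n - (k + 2). coeff g m = 0"
    by (rule coeffs_vanish_by_residue_sums)
  then have "g = (\<Sum>r<n - k - 2. monom (coeff g r) r)"
    by (intro poly_eq_sum_monom_lessThan) simp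
  then have "f = (\<Sum>r<n - k - 2. monom (coeff g r) r) + smult a ?\<Lambda> + smult b ?\<Gamma>"
    unfolding g_def by (simp add: algebra_simps)
  also have "\<dots> = (\<Sum>r<n - k. smult (c r) (parity_poly n k \<alpha> r))"
    using k_le by (subst sum_parity_poly) (auto simp: c_def)
  finally show ?thesis by (rule exI[of _ c])
qed

lemma dual_code_subset_row_space_parH:
  "dual_code n (row_space k n (genG k \<alpha>)) \<subseteq> row_space (n - k) n (parH n k \<alpha>)"
proof
  fix y assume y: "y \<in> dual_code n (row_space k n (genG k \<alpha>))"
  obtain f where f_deg: "\<forall>m\<ge>n. coeff f m = 0"
    and f_y: "\<forall>i<n. uco n \<alpha> i * poly f (\<alpha> i) = y i"
    using exists_interpolating_poly by blast
  have "residue_sum n \<alpha> (monom 1 (gen_exp k r) * f) = 0" if "r < k" for r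
    using dual_code_orthogonal_row[OF y that] f_y
    by (simp add: sum_genG_mult_eq_residue_sum[symmetric])
  then obtain c where f: "f = (\<Sum>r<n - k. smult (c r) (parity_poly n k \<alpha> r))"
    using parity_polys_span f_deg by blast
  have "y = zero_ext n (\<lambda>i. \<Sum>r<n - k. c r * parH n k \<alpha> r i)"
    using y f_y by (auto simp: zero_ext_def dual_code_def vecs_def f uco_mult_poly_sum_parity_poly[symmetric])
  then show "y \<in> row_space (n - k) n (parH n k \<alpha>)"
    by (auto simp: row_space_def)
qed

lemma full_row_rank_parH: "full_row_rank (n - k) n (parH n k \<alpha>)"
  unfolding full_row_rank_def
proof (intro allI impI)
  fix c :: "nat \<Rightarrow> 'a" and r
  assume rows: "\<forall>i<n. (\<Sum>r<n - k. c r * parH n k \<alpha> r i) = 0" and "r < n - k"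
  have "(\<Sum>r<n - k. smult (c r) (parity_poly n k \<alpha> r)) = 0"
  proof (rule poly_eq_0_if_vanishes_at_nodes)
    show "\<forall>m\<ge>n. coeff (\<Sum>r<n - k. smult (c r) (parity_poly n k \<alpha> r)) m = 0"
      using k_ge k_le by (auto simp: coeff_sum intro!: sum.neutral coeff_parity_poly)
    show "\<forall>i<n. poly (\<Sum>r<n - k. smult (c r) (parity_poly n k \<alpha> r)) (\<alpha> i) = 0"
      using rows uco_nonzero by (simp flip: uco_mult_poly_sum_parity_poly)
  qed
  then show "c r = 0"
    using parity_polys_independent k_le \<open>r < n - k\<close> by blast
qed

end

theorem theorem3p2:
  fixes \<alpha> :: "nat \<Rightarrow> 'a::{finite, field}" and n k :: nat
  assumes "3 \<le> k" and "k \<le> n - 2" and "n - 2 \<le> card (UNIV :: 'a set) - 2"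
    and "inj_on \<alpha> {..<n}"
  shows "parity_check (n - k) n (parH n k \<alpha>) (row_space k n (genG k \<alpha>))"
proof -
  interpret parity_check_setup \<alpha> n k
    using assms by unfold_locales simp_all
  show ?thesis
    unfolding parity_check_def
    using full_row_rank_parH row_space_parH_subset_dual_code dual_code_subset_row_space_parH by blast
qed

end
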